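(* Let $G$ be a connected graph. Then $\{\bar{x},\overline{xy}\}\,\Theta^\ast_{S(G)}\,\{\overline{xy},\bar{y}\}$ holds for every edge $\{x,y\}$ of $G$ if and only if $\Theta^\ast_{S(G)}=S(\Theta^\ast_G)$.
   Context: For a connected graph $H$ with shortest-path distance $d_H$, two edges $\{x,y\}$ and $\{u,v\}$ of $H$ are in relation $\Theta_H$ if $d_H(x,u)+d_H(y,v)\neq d_H(x,v)+d_H(y,u)$; $\Theta^\ast_H$ is the transitive closure of $\Theta_H$. The full subdivision $S(G)$ is obtained by subdividing every edge of $G$ exactly once; the vertex of $S(G)$ corresponding to $x\in V(G)$ is $\bar{x}$ and the vertex subdividing $\{x,y\}\in E(G)$ is $\overline{xy}$. $S(\Theta^\ast_G)$ denotes the relation on $E(S(G))$ in which $\{\bar{x},\overline{xy}\}$ and $\{\bar{u},\overline{uv}\}$ are related if and only if $\{x,y\}\,\Theta^\ast_G\,\{u,v\}$ (in particular $\{\bar{x},\overline{xy}\}$ and $\{\overline{xy},\bar{y}\}$ are always related). *)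

theory Defs
  imports Main
begin

definition simple_graph :: "'a set \<Rightarrow> 'a set set \<Rightarrow> bool" where
  "simple_graph V E \<longleftrightarrow> finite V \<and>
     (\<forall>e\<in>E. \<exists>x y. e = {x, y} \<and> x \<noteq> y \<and> x \<in> V \<and> y \<in> V)"

definition adj :: "'a set set \<Rightarrow> 'a \<Rightarrow> 'a \<Rightarrow> bool" where
  "adj E x y \<longleftrightarrow> {x, y} \<in> E \<and> x \<noteq> y"

definition connected_graph :: "'a set \<Rightarrow> 'a set set \<Rightarrow> bool" where
  "connected_graph V E \<longleftrightarrow> simple_graph V E \<and> V \<noteq> {} \<and>
     (\<forall>x\<in>V. \<forall>y\<in>V. (adj E)\<^sup>*\<^sup>* x y)"

definition gdist :: "'a set set \<Rightarrow> 'a \<Rightarrow> 'a \<Rightarrow> nat" where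
  "gdist E x y = (LEAST n. (adj E ^^ n) x y)"

definition Theta :: "'a set set \<Rightarrow> 'a set \<Rightarrow> 'a set \<Rightarrow> bool" where
  "Theta E e f \<longleftrightarrow> e \<in> E \<and> f \<in> E \<and>
     (\<exists>x y u v. e = {x, y} \<and> f = {u, v} \<and>
        gdist E x u + gdist E y v \<noteq> gdist E x v + gdist E y u)"

definition ThetaStar :: "'a set set \<Rightarrow> 'a set \<Rightarrow> 'a set \<Rightarrow> bool" where
  "ThetaStar E = (Theta E)\<^sup>+\<^sup>+"

text \<open>Full subdivision: original vertices \<open>Orig x\<close> (= x bar) and subdivision
  vertices \<open>Sub e\<close> (= xy bar for e = {x,y}).\<close>
datatype 'a svert = Orig 'a | Sub "'a set"

definition subdiv_V :: "'a set \<Rightarrow> 'a set set \<Rightarrow> 'a svert set" where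
  "subdiv_V V E = Orig ` V \<union> Sub ` E"

definition subdiv_E :: "'a set set \<Rightarrow> 'a svert set set" where
  "subdiv_E E = {{Orig x, Sub e} | x e. e \<in> E \<and> x \<in> e}"

definition S_rel :: "'a set set \<Rightarrow> 'a svert set \<Rightarrow> 'a svert set \<Rightarrow> bool" where
  "S_rel E a b \<longleftrightarrow> (\<exists>x e u f. x \<in> e \<and> e \<in> E \<and> u \<in> f \<and> f \<in> E \<and>
      a = {Orig x, Sub e} \<and> b = {Orig u, Sub f} \<and> ThetaStar E e f)"

end

(*
  Distances in the full subdivision S(G) are determined by those in G:
  d(x, u) doubles, the subdivision vertex of e = xy lies at distance
  1 + 2 min (d(x, u), d(y, u)) from u, and for e \<noteq> f = uv the two subdivision
  vertices lie at distance 2 + 2 min of the four endpoint distances.  Inserting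
  these values into the definition of Theta, and using that adjacent vertices
  have distances differing by at most one, a Theta-relation between a half of
  e and a half of f forces e Theta f or e = f; conversely e Theta f forces a
  Theta-relation between some half of e and some half of f, since the four
  half-edge conditions add up to the Theta condition for e and f.  Hence the
  transitive closure of Theta on S(G) is always contained in S(Theta* of G), and
  the reverse inclusion amounts to the two halves of every edge being related.
*)

theory Submission
  imports Defs
begin

lemma adj_sym: "adj E x y \<Longrightarrow> adj E y x"
  unfolding adj_def by (auto simp: insert_commute)

lemma relpowp_adj_sym: "(adj E ^^ n) p q \<Longrightarrow> (adj E ^^ n) q p"
proof (induction n arbitrary: q)
  case 0
  then show ?case by simp
next
  case (Suc n)
  then obtain r where "(adj E ^^ n) p r" "adj E r q"
    by auto
  with Suc.IH show ?case
    by (metis adj_sym relpowp_Suc_I2)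
qed

lemma gdist_le: "(adj E ^^ n) p q \<Longrightarrow> gdist E p q \<le> n"
  unfolding gdist_def by (rule Least_le)

lemma gdist_walk: "(adj E)\<^sup>*\<^sup>* p q \<Longrightarrow> (adj E ^^ gdist E p q) p q"
  unfolding gdist_def rtranclp_power by (metis LeastI)

lemma gdist_sym: "gdist E p q = gdist E q p"
  unfolding gdist_def by (metis relpowp_adj_sym)

lemma gdist_self [simp]: "gdist E p p = 0"
  using gdist_le[of 0 E p p] by simp

lemma gdist_adj: "adj E p q \<Longrightarrow> gdist E p q = 1"
proof -
  assume pq: "adj E p q"
  then have "(adj E ^^ gdist E p q) p q"
    by (intro gdist_walk) auto
  with pq have "gdist E p q \<noteq> 0"
    by (metis adj_def relpowp.simps(1))
  moreover from pq have "gdist E p q \<le> 1"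
    by (intro gdist_le) (metis relpowp_1)
  ultimately show ?thesis
    by simp
qed

lemma gdist_adj_le: "adj E p r \<Longrightarrow> (adj E)\<^sup>*\<^sup>* r q \<Longrightarrow> gdist E p q \<le> gdist E r q + 1"
  using gdist_walk[of E r q] gdist_le relpowp_Suc_I2 by (metis Suc_eq_plus1)

lemma gdist_first_step:
  assumes "(adj E)\<^sup>*\<^sup>* p q" "p \<noteq> q"
  obtains r where "adj E p r" "gdist E p q = gdist E r q + 1"
proof -
  obtain m where m: "gdist E p q = Suc m"
    using gdist_walk[OF assms(1)] assms(2) by (cases "gdist E p q") auto
  then obtain r where r: "adj E p r" "(adj E ^^ m) r q"
    using gdist_walk[OF assms(1)] by (metis relpowp_Suc_D2)
  then have "gdist E p q \<le> gdist E r q + 1"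
    by (metis gdist_adj_le relpowp_imp_rtranclp)
  with m gdist_le[OF r(2)] have "gdist E p q = gdist E r q + 1"
    by simp
  with r(1) show thesis
    by (rule that)
qed

lemma gdist_two_neighbours:
  assumes nbrs: "\<And>r. adj E p r \<longleftrightarrow> r = a \<or> r = b"
    and aq: "(adj E)\<^sup>*\<^sup>* a q" and bq: "(adj E)\<^sup>*\<^sup>* b q" and "p \<noteq> q"
  shows "gdist E p q = 1 + min (gdist E a q) (gdist E b q)"
proof -
  have pa: "adj E p a" and pb: "adj E p b"
    using nbrs by blast+
  have "(adj E)\<^sup>*\<^sup>* p q"
    using pa aq by (rule converse_rtranclp_into_rtranclp)
  then obtain r where pr: "adj E p r" and r: "gdist E p q = gdist E r q + 1"
    using assms(4) by (rule gdist_first_step)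
  have "r = a \<or> r = b"
    using nbrs pr by blast
  with r gdist_adj_le[OF pa aq] gdist_adj_le[OF pb bq] show ?thesis
    by auto
qed

lemma Theta_iff:
  assumes "e = {x, y}" "f = {u, v}"
  shows "Theta E e f \<longleftrightarrow> e \<in> E \<and> f \<in> E \<and>
     gdist E x u + gdist E y v \<noteq> gdist E x v + gdist E y u"
proof
  assume "Theta E e f"
  then obtain x' y' u' v' where h: "e \<in> E" "f \<in> E" "e = {x', y'}" "f = {u', v'}"
    "gdist E x' u' + gdist E y' v' \<noteq> gdist E x' v' + gdist E y' u'"
    unfolding Theta_def by blast
  from h(3,4) assms have "(x' = x \<and> y' = y \<or> x' = y \<and> y' = x) \<and> (u' = u \<and> v' = v \<or> u' = v \<and> v' = u)"
    by (auto simp: doubleton_eq_iff)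
  with h show "e \<in> E \<and> f \<in> E \<and> gdist E x u + gdist E y v \<noteq> gdist E x v + gdist E y u"
    by (auto simp: gdist_sym)
next
  assume "e \<in> E \<and> f \<in> E \<and> gdist E x u + gdist E y v \<noteq> gdist E x v + gdist E y u"
  with assms show "Theta E e f"
    unfolding Theta_def by blast
qed

lemma Theta_self: "adj E x y \<Longrightarrow> Theta E {x, y} {x, y}"
  by (subst Theta_iff[OF refl refl]) (auto simp: gdist_adj adj_def gdist_sym)

lemma ThetaStar_self: "adj E x y \<Longrightarrow> ThetaStar E {x, y} {x, y}"
  unfolding ThetaStar_def by (blast intro: Theta_self)

lemma adj_subdiv_Orig_Sub [simp]: "adj (subdiv_E E) (Orig x) (Sub e) \<longleftrightarrow> e \<in> E \<and> x \<in> e"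
  unfolding adj_def subdiv_E_def by (auto simp: doubleton_eq_iff)

lemma adj_subdiv_Sub_Orig [simp]: "adj (subdiv_E E) (Sub e) (Orig x) \<longleftrightarrow> e \<in> E \<and> x \<in> e"
  using adj_subdiv_Orig_Sub adj_sym by metis

lemma not_adj_subdiv_Orig_Orig [simp]: "\<not> adj (subdiv_E E) (Orig x) (Orig y)"
  unfolding adj_def subdiv_E_def by (auto simp: doubleton_eq_iff)

lemma not_adj_subdiv_Sub_Sub [simp]: "\<not> adj (subdiv_E E) (Sub e) (Sub f)"
  unfolding adj_def subdiv_E_def by (auto simp: doubleton_eq_iff)

lemma relpowp_subdiv_double:
  "(adj E ^^ n) x u \<Longrightarrow> (adj (subdiv_E E) ^^ (2 * n)) (Orig x) (Orig u)"
proof (induction n arbitrary: x)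
  case 0
  then show ?case by simp
next
  case (Suc n)
  then obtain r where xr: "adj E x r" and "(adj E ^^ n) r u"
    by (metis relpowp_Suc_D2)
  from this(2) have "(adj (subdiv_E E) ^^ (2 * n)) (Orig r) (Orig u)"
    by (rule Suc.IH)
  moreover from xr have "{x, r} \<in> E"
    by (simp add: adj_def)
  then have "adj (subdiv_E E) (Orig x) (Sub {x, r})" "adj (subdiv_E E) (Sub {x, r}) (Orig r)"
    by simp_all
  ultimately have "(adj (subdiv_E E) ^^ Suc (Suc (2 * n))) (Orig x) (Orig u)"
    by (metis relpowp_Suc_I2)
  then show ?case
    by simp
qed

lemma adj_if_in_edge:
  assumes "simple_graph V E" "e \<in> E" "x \<in> e" "y \<in> e" "x \<noteq> y"
  shows "adj E x y"
proof -
  obtain a b where "e = {a, b}"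
    using assms(1,2) unfolding simple_graph_def by blast
  with assms(3-5) have "e = {x, y}"
    by auto
  with assms(2,5) show ?thesis
    unfolding adj_def by simp
qed

lemma relpowp_subdiv_halve:
  assumes "simple_graph V E" "(adj (subdiv_E E) ^^ n) (Orig x) (Orig u)"
  shows "\<exists>m. 2 * m \<le> n \<and> (adj E ^^ m) x u"
  using assms(2)
proof (induction n arbitrary: x rule: less_induct)
  case (less n)
  show ?case
  proof (cases n)
    case 0
    with less.prems show ?thesis
      by auto
  next
    case (Suc n')
    with less.prems obtain r where "adj (subdiv_E E) (Orig x) r" "(adj (subdiv_E E) ^^ n') r (Orig u)"
      by (metis relpowp_Suc_D2)
    then obtain e where e: "e \<in> E" "x \<in> e" and walk_e: "(adj (subdiv_E E) ^^ n') (Sub e) (Orig u)"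
      by (cases r) auto
    then obtain k where k: "n' = Suc k"
      by (cases n') auto
    with walk_e obtain s where "adj (subdiv_E E) (Sub e) s" "(adj (subdiv_E E) ^^ k) s (Orig u)"
      by (metis relpowp_Suc_D2)
    then obtain y where y: "y \<in> e" and walk_y: "(adj (subdiv_E E) ^^ k) (Orig y) (Orig u)"
      by (cases s) auto
    obtain m where m: "2 * m \<le> k" "(adj E ^^ m) y u"
      using less.IH[OF _ walk_y] Suc k by auto
    show ?thesis
    proof (cases "x = y")
      case True
      with m Suc k show ?thesis
        by (intro exI[of _ m]) simp
    next
      case False
      with assms(1) e y have "adj E x y"
        by (rule adj_if_in_edge)
      from this m(2) have "(adj E ^^ Suc m) x u"
        by (rule relpowp_Suc_I2)
      with m(1) Suc k show ?thesis
        by (intro exI[of _ "Suc m"]) simp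
    qed
  qed
qed

text \<open>With (a, c, b, g) = (d(x,u), d(x,v), d(y,u), d(y,v)) for edges xy and uv.\<close>
lemma balanced_unit_square_min_eq:
  fixes a b c g :: nat
  assumes "a \<le> c + 1" "c \<le> a + 1" "b \<le> g + 1" "g \<le> b + 1"
    and "a \<le> b + 1" "b \<le> a + 1" "c \<le> g + 1" "g \<le> c + 1"
    and "a + g = b + c"
  shows "a + min (min a c) (min b g) = min a c + min a b"
  using assms by (simp add: min_def split: if_splits)

lemma S_rel_trans: "S_rel E a b \<Longrightarrow> S_rel E b c \<Longrightarrow> S_rel E a c"
  unfolding S_rel_def ThetaStar_def by (auto simp: doubleton_eq_iff)

context
  fixes V :: "'a set" and E :: "'a set set"
  assumes connected: "connected_graph V E"
begin

lemma graph_simple: "simple_graph V E"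
  using connected unfolding connected_graph_def by blast

lemma edge_adj:
  assumes "{x, y} \<in> E"
  shows "adj E x y"
proof -
  obtain a b where "{x, y} = {a, b}" "a \<noteq> b"
    using assms graph_simple unfolding simple_graph_def by blast
  then have "x \<noteq> y"
    by auto
  with assms show ?thesis
    unfolding adj_def by simp
qed

lemma edge_in_V:
  assumes "{x, y} \<in> E"
  shows "x \<in> V" "y \<in> V"
proof -
  obtain a b where "{x, y} = {a, b}" "a \<in> V" "b \<in> V"
    using assms graph_simple unfolding simple_graph_def by blast
  then show "x \<in> V" "y \<in> V"
    by (auto simp: doubleton_eq_iff)
qed

lemma edge_other_end:
  assumes "e \<in> E" "x \<in> e"
  obtains y where "e = {x, y}"
proof -
  obtain a b where "e = {a, b}"
    using assms(1) graph_simple unfolding simple_graph_def by blast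
  with assms(2) have "e = {x, b} \<or> e = {x, a}"
    by (auto simp: insert_commute)
  with that show thesis
    by blast
qed

lemma reachable: "x \<in> V \<Longrightarrow> y \<in> V \<Longrightarrow> (adj E)\<^sup>*\<^sup>* x y"
  using connected unfolding connected_graph_def by blast

lemma gdist_edge_le: "{x, y} \<in> E \<Longrightarrow> u \<in> V \<Longrightarrow> gdist E x u \<le> gdist E y u + 1"
  using gdist_adj_le[OF edge_adj reachable] edge_in_V by blast

lemma reachable_subdiv: "x \<in> V \<Longrightarrow> u \<in> V \<Longrightarrow> (adj (subdiv_E E))\<^sup>*\<^sup>* (Orig x) (Orig u)"
  using relpowp_subdiv_double[OF gdist_walk[OF reachable]] by (metis relpowp_imp_rtranclp)

lemma gdist_subdiv_Orig_Orig:
  assumes "x \<in> V" "u \<in> V"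
  shows "gdist (subdiv_E E) (Orig x) (Orig u) = 2 * gdist E x u"
proof (rule antisym)
  show "gdist (subdiv_E E) (Orig x) (Orig u) \<le> 2 * gdist E x u"
    using assms by (intro gdist_le relpowp_subdiv_double gdist_walk reachable)
  obtain m where "2 * m \<le> gdist (subdiv_E E) (Orig x) (Orig u)" "(adj E ^^ m) x u"
    using relpowp_subdiv_halve[OF graph_simple gdist_walk[OF reachable_subdiv[OF assms]]] by blast
  then show "2 * gdist E x u \<le> gdist (subdiv_E E) (Orig x) (Orig u)"
    using gdist_le[of m E x u] by linarith
qed

lemma adj_subdiv_Sub_iff:
  "{u, v} \<in> E \<Longrightarrow> adj (subdiv_E E) (Sub {u, v}) r \<longleftrightarrow> r = Orig u \<or> r = Orig v"
  by (cases r) auto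

lemma gdist_subdiv_Sub_Orig:
  assumes "{u, v} \<in> E" "x \<in> V"
  shows "gdist (subdiv_E E) (Sub {u, v}) (Orig x) = 1 + 2 * min (gdist E u x) (gdist E v x)"
  using gdist_two_neighbours[OF adj_subdiv_Sub_iff[OF assms(1)]] assms edge_in_V
    reachable_subdiv gdist_subdiv_Orig_Orig by auto

lemma gdist_subdiv_Sub_Sub:
  assumes "{x, y} \<in> E" "{u, v} \<in> E" "{x, y} \<noteq> {u, v}"
  shows "gdist (subdiv_E E) (Sub {x, y}) (Sub {u, v}) =
    2 + 2 * min (min (gdist E x u) (gdist E x v)) (min (gdist E y u) (gdist E y v))"
proof -
  have "(adj (subdiv_E E))\<^sup>*\<^sup>* (Orig z) (Sub {u, v})" if "z \<in> V" for z
    using reachable_subdiv[OF that edge_in_V(1)[OF assms(2)]] assms(2)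
    by (simp add: rtranclp.rtrancl_into_rtrancl)
  then have "gdist (subdiv_E E) (Sub {x, y}) (Sub {u, v}) =
      1 + min (gdist (subdiv_E E) (Sub {u, v}) (Orig x)) (gdist (subdiv_E E) (Sub {u, v}) (Orig y))"
    using gdist_two_neighbours[OF adj_subdiv_Sub_iff[OF assms(1)]] edge_in_V[OF assms(1)] assms(3)
    by (simp add: gdist_sym[of "subdiv_E E" "Sub {u, v}"])
  with assms(2) edge_in_V[OF assms(1)] show ?thesis
    by (simp add: gdist_subdiv_Sub_Orig gdist_sym[of E u] gdist_sym[of E v])
qed

lemma Theta_subdiv_halves_iff:
  assumes "{x, y} \<in> E" "{u, v} \<in> E"
  shows "Theta (subdiv_E E) {Orig x, Sub {x, y}} {Orig u, Sub {u, v}} \<longleftrightarrow>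
    2 * gdist E x u + gdist (subdiv_E E) (Sub {x, y}) (Sub {u, v}) \<noteq>
    2 + 2 * min (gdist E x u) (gdist E x v) + 2 * min (gdist E x u) (gdist E y u)"
proof -
  have "{Orig x, Sub {x, y}} \<in> subdiv_E E" "{Orig u, Sub {u, v}} \<in> subdiv_E E"
    using assms unfolding subdiv_E_def by blast+
  with assms edge_in_V show ?thesis
    by (auto simp: Theta_iff[OF refl refl] gdist_subdiv_Orig_Orig gdist_subdiv_Sub_Orig
        gdist_sym[of "subdiv_E E" "Orig x"] gdist_sym[of E u x] gdist_sym[of E v x])
qed

lemma Theta_subdiv_halves_imp_Theta:
  assumes "{x, y} \<in> E" "{u, v} \<in> E" "{x, y} \<noteq> {u, v}"
    and "Theta (subdiv_E E) {Orig x, Sub {x, y}} {Orig u, Sub {u, v}}"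
  shows "Theta E {x, y} {u, v}"
proof (rule ccontr)
  assume "\<not> Theta E {x, y} {u, v}"
  with assms(1,2) have "gdist E x u + gdist E y v = gdist E y u + gdist E x v"
    by (simp add: Theta_iff[OF refl refl])
  with gdist_edge_le edge_in_V assms(1,2)
  have "gdist E x u + min (min (gdist E x u) (gdist E x v)) (min (gdist E y u) (gdist E y v)) =
      min (gdist E x u) (gdist E x v) + min (gdist E x u) (gdist E y u)"
    by (intro balanced_unit_square_min_eq) (metis gdist_sym insert_commute)+
  with assms show False
    by (simp add: Theta_subdiv_halves_iff gdist_subdiv_Sub_Sub)
qed

lemma Theta_subdiv_imp_S_rel:
  assumes "Theta (subdiv_E E) a b"
  shows "S_rel E a b"
proof -
  have "a \<in> subdiv_E E" "b \<in> subdiv_E E"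
    using assms unfolding Theta_def by auto
  then obtain x e u f where a: "a = {Orig x, Sub e}" "e \<in> E" "x \<in> e"
    and b: "b = {Orig u, Sub f}" "f \<in> E" "u \<in> f"
    unfolding subdiv_E_def by blast
  obtain y v where e: "e = {x, y}" and f: "f = {u, v}"
    using edge_other_end a(2,3) b(2,3) by metis
  have "ThetaStar E e f"
  proof (cases "e = f")
    case True
    with ThetaStar_self[OF edge_adj] a(2) e show ?thesis
      by simp
  next
    case False
    with Theta_subdiv_halves_imp_Theta assms a b e f have "Theta E e f"
      by blast
    then show ?thesis
      unfolding ThetaStar_def by blast
  qed
  with a b show ?thesis
    unfolding S_rel_def by blast
qed

lemma Theta_imp_Theta_subdiv_halves:
  assumes "Theta E e f"
  obtains p q where "p \<in> e" "q \<in> f" "Theta (subdiv_E E) {Orig p, Sub e} {Orig q, Sub f}"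
proof -
  have "e \<in> E" "f \<in> E"
    using assms unfolding Theta_def by auto
  then obtain x y u v where e: "e = {x, y}" and f: "f = {u, v}"
    using graph_simple unfolding simple_graph_def by meson
  have E: "{x, y} \<in> E" "{y, x} \<in> E" "{u, v} \<in> E" "{v, u} \<in> E"
    using \<open>e \<in> E\<close> \<open>f \<in> E\<close> e f by (simp_all add: insert_commute)
  have "\<exists>p\<in>e. \<exists>q\<in>f. Theta (subdiv_E E) {Orig p, Sub e} {Orig q, Sub f}"
  proof (rule ccontr)
    assume "\<not> (\<exists>p\<in>e. \<exists>q\<in>f. Theta (subdiv_E E) {Orig p, Sub e} {Orig q, Sub f})"
    \<comment> \<open>Summing the four resulting equalities, the terms with min cancel in pairs.\<close>
    then have "gdist E x u + gdist E y v = gdist E x v + gdist E y u"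
      using Theta_subdiv_halves_iff[OF E(1,3)] Theta_subdiv_halves_iff[OF E(1,4)]
        Theta_subdiv_halves_iff[OF E(2,3)] Theta_subdiv_halves_iff[OF E(2,4)]
      by (simp add: e f insert_commute min.commute)
    with assms show False
      by (simp add: Theta_iff[OF e f])
  qed
  with that show thesis
    by blast
qed

lemma ThetaStar_subdiv_imp_S_rel: "ThetaStar (subdiv_E E) a b \<Longrightarrow> S_rel E a b"
  unfolding ThetaStar_def
proof (induction rule: tranclp_induct)
  case (base b)
  then show ?case
    by (rule Theta_subdiv_imp_S_rel)
next
  case (step b c)
  from step.IH Theta_subdiv_imp_S_rel[OF step.hyps(2)] show ?case
    by (rule S_rel_trans)
qed

context
  assumes halves: "\<forall>x y. {x, y} \<in> E \<and> x \<noteq> y \<longrightarrow>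
    ThetaStar (subdiv_E E) {Orig x, Sub {x, y}} {Sub {x, y}, Orig y}"
begin

lemma ThetaStar_subdiv_same_edge:
  assumes "e \<in> E" "p \<in> e" "q \<in> e"
  shows "ThetaStar (subdiv_E E) {Orig p, Sub e} {Orig q, Sub e}"
proof (cases "p = q")
  case True
  with assms(1,2) show ?thesis
    using ThetaStar_self[of "subdiv_E E" "Orig p" "Sub e"] by simp
next
  case False
  obtain r where "e = {p, r}"
    using edge_other_end assms(1,2) by blast
  with assms(3) False have "e = {p, q}"
    by auto
  with halves assms(1) False show ?thesis
    by (simp add: insert_commute)
qed

lemma Theta_imp_ThetaStar_subdiv:
  assumes "Theta E e f" "p \<in> e" "q \<in> f"
  shows "ThetaStar (subdiv_E E) {Orig p, Sub e} {Orig q, Sub f}"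
proof -
  have "e \<in> E" "f \<in> E"
    using assms(1) unfolding Theta_def by auto
  obtain p' q' where "p' \<in> e" "q' \<in> f" and "Theta (subdiv_E E) {Orig p', Sub e} {Orig q', Sub f}"
    using Theta_imp_Theta_subdiv_halves[OF assms(1)] .
  with ThetaStar_subdiv_same_edge[OF \<open>e \<in> E\<close> assms(2)]
    ThetaStar_subdiv_same_edge[OF \<open>f \<in> E\<close> _ assms(3)]
  show ?thesis
    unfolding ThetaStar_def by (meson tranclp.r_into_trancl tranclp_trans)
qed

lemma S_rel_imp_ThetaStar_subdiv:
  assumes "S_rel E a b"
  shows "ThetaStar (subdiv_E E) a b"
proof -
  obtain p e q f where "p \<in> e" "q \<in> f" "a = {Orig p, Sub e}" "b = {Orig q, Sub f}"
    and "(Theta E)\<^sup>+\<^sup>+ e f"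
    using assms unfolding S_rel_def ThetaStar_def by blast
  moreover have "ThetaStar (subdiv_E E) {Orig p, Sub e} {Orig q, Sub f}"
    if "(Theta E)\<^sup>+\<^sup>+ e f" "p \<in> e" "q \<in> f" for e f p q
    using that
  proof (induction arbitrary: q rule: tranclp_induct)
    case (base f)
    then show ?case
      by (rule Theta_imp_ThetaStar_subdiv)
  next
    case (step f g)
    have "f \<in> E"
      using step.hyps(2) unfolding Theta_def by blast
    then obtain r s where "f = {r, s}"
      using graph_simple unfolding simple_graph_def by meson
    then have "ThetaStar (subdiv_E E) {Orig p, Sub e} {Orig r, Sub f}"
      and "ThetaStar (subdiv_E E) {Orig r, Sub f} {Orig q, Sub g}"
      using step Theta_imp_ThetaStar_subdiv by simp_all
    then show ?case
      unfolding ThetaStar_def by (rule tranclp_trans)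
  qed
  ultimately show ?thesis
    by blast
qed

end

end

lemma S_rel_halves:
  assumes "adj E x y"
  shows "S_rel E {Orig x, Sub {x, y}} {Sub {x, y}, Orig y}"
proof -
  have "S_rel E {Orig x, Sub {x, y}} {Orig y, Sub {x, y}}"
    using ThetaStar_self[OF assms] assms unfolding S_rel_def adj_def by blast
  then show ?thesis
    by (simp only: insert_commute)
qed

theorem lemma3p5:
  fixes V :: "'a set" and E :: "'a set set"
  assumes "connected_graph V E"
  shows "(\<forall>x y. {x, y} \<in> E \<and> x \<noteq> y \<longrightarrow>
            ThetaStar (subdiv_E E) {Orig x, Sub {x, y}} {Sub {x, y}, Orig y})
         \<longleftrightarrow> ThetaStar (subdiv_E E) = S_rel E"
proof
  assume halves: "\<forall>x y. {x, y} \<in> E \<and> x \<noteq> y \<longrightarrow>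
    ThetaStar (subdiv_E E) {Orig x, Sub {x, y}} {Sub {x, y}, Orig y}"
  show "ThetaStar (subdiv_E E) = S_rel E"
  proof (intro ext iffI)
    fix a b
    show "ThetaStar (subdiv_E E) a b \<Longrightarrow> S_rel E a b"
      by (rule ThetaStar_subdiv_imp_S_rel[OF assms])
    show "S_rel E a b \<Longrightarrow> ThetaStar (subdiv_E E) a b"
      by (rule S_rel_imp_ThetaStar_subdiv[OF assms halves])
  qed
next
  assume eq: "ThetaStar (subdiv_E E) = S_rel E"
  show "\<forall>x y. {x, y} \<in> E \<and> x \<noteq> y \<longrightarrow>
    ThetaStar (subdiv_E E) {Orig x, Sub {x, y}} {Sub {x, y}, Orig y}"
  proof (intro allI impI)
    fix x y
    assume "{x, y} \<in> E \<and> x \<noteq> y"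
    then have "adj E x y"
      by (simp add: adj_def)
    then show "ThetaStar (subdiv_E E) {Orig x, Sub {x, y}} {Sub {x, y}, Orig y}"
      by (simp add: eq S_rel_halves)
  qed
qed

end
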